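(* Let $((G_n)_{n\in\mathbb{N}},(\rho_n)_{n\in\mathbb{N}},(\kappa_k^n)_{k\le n})$ be a $d$-ary cloning system, $n\in\mathbb{N}$, $g\in G_n$. For any $m\ge 2$ and natural numbers $k_1,\dots,k_m$ with $k_i\in\{1,\dots,n+(i-1)(d-1)\}$, $$\Big[(g)\big(\kappa_{k_1}^n\circ\kappa_{k_2}^{n+d-1}\circ\cdots\circ\kappa_{k_m}^{n+(m-1)(d-1)}\big)\Big]^{-1}=(g^{-1})\big(\kappa_{\alpha_1}^n\circ\kappa_{\alpha_2}^{n+d-1}\circ\cdots\circ\kappa_{\alpha_m}^{n+(m-1)(d-1)}\big),$$ where $\alpha_1=\rho_n(g)k_1$ and, for $i=2,\dots,m$, $\alpha_i=\rho_{n+(i-1)(d-1)}\Big((g)\big(\kappa_{k_1}^n\circ\kappa_{k_2}^{n+d-1}\circ\cdots\circ\kappa_{k_{i-1}}^{n+(i-2)(d-1)}\big)\Big)k_i$.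
   Context: Fix $d\ge 2$. Standard cloning maps: for $\sigma\in S_n$, $1\le k\le n$, partition $\{1,\dots,n+d-1\}$ into consecutive blocks $B^{(k)}_j=\{j\}$ ($j<k$), $B^{(k)}_k=\{k,\dots,k+d-1\}$, $B^{(k)}_j=\{j+d-1\}$ ($j>k$); $(\sigma)\varsigma_k^n\in S_{n+d-1}$ maps $B^{(k)}_j$ onto $B^{(\sigma(k))}_{\sigma(j)}$ order-preservingly. A $d$-ary cloning system consists of groups $(G_n)_{n\in\mathbb{N}}$, homomorphisms $\rho_n:G_n\to S_n$, and injective functions (not necessarily homomorphisms) $\kappa_k^n:G_n\to G_{n+d-1}$, $1\le k\le n$, written on the right, with composition convention $(g)(\kappa\circ\kappa'):=((g)\kappa)\kappa'$, such that for $1\le k<\ell\le n$ and $g,h\in G_n$: (C1) $(gh)\kappa_k^n=(g)\kappa^n_{\rho_n(h)k}\,(h)\kappa_k^n$; (C2) $\kappa_\ell^n\circ\kappa_k^{n+d-1}=\kappa_k^n\circ\kappa_{\ell+d-1}^{n+d-1}$; (C3) $\rho_{n+d-1}((g)\kappa_k^n)(i)=((\rho_n(g))\varsigma_k^n)(i)$ for $i\notin\{k,\dots,k+d-1\}$. (Axiom (C1) is understood to hold for all $1\le k\le n$.) *)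

theory Defs
  imports "HOL-Algebra.Group" "HOL-Combinatorics.Permutations"
begin

text \<open>Blocks of the partition of {1..n+d-1} associated with k:
  B_j = {j} for j<k, B_k = {k..k+d-1}, B_j = {j+d-1} for j>k.\<close>

definition block_idx :: "nat \<Rightarrow> nat \<Rightarrow> nat \<Rightarrow> nat" where
  "block_idx d k i = (if i < k then i else if i < k + d then k else i - (d - 1))"

definition block_start :: "nat \<Rightarrow> nat \<Rightarrow> nat \<Rightarrow> nat" where
  "block_start d k j = (if j \<le> k then j else j + (d - 1))"

text \<open>Standard cloning map: (sigma) varsigma_k^n, mapping B^(k)_j onto
  B^(sigma k)_(sigma j) order-preservingly; identity outside {1..n+d-1}.\<close>
definition std_clone :: "nat \<Rightarrow> nat \<Rightarrow> (nat \<Rightarrow> nat) \<Rightarrow> nat \<Rightarrow> nat \<Rightarrow> nat" where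
  "std_clone d n \<sigma> k i =
     (if 1 \<le> i \<and> i \<le> n + d - 1
      then block_start d (\<sigma> k) (\<sigma> (block_idx d k i)) + (i - block_start d k (block_idx d k i))
      else i)"

text \<open>d-ary cloning system: G n groups (common element type), rho n homomorphisms
  into S_n (permutations of {1..n}, composed as functions), kappa n k the cloning maps.\<close>
definition cloning_system ::
  "nat \<Rightarrow> (nat \<Rightarrow> 'g monoid) \<Rightarrow> (nat \<Rightarrow> 'g \<Rightarrow> nat \<Rightarrow> nat) \<Rightarrow> (nat \<Rightarrow> nat \<Rightarrow> 'g \<Rightarrow> 'g) \<Rightarrow> bool"
where
  "cloning_system d G \<rho> \<kappa> \<longleftrightarrow>
     (\<forall>n\<ge>1. group (G n)) \<and>
     (\<forall>n\<ge>1. \<forall>g\<in>carrier (G n). \<rho> n g permutes {1..n}) \<and>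
     (\<forall>n\<ge>1. \<forall>g\<in>carrier (G n). \<forall>h\<in>carrier (G n).
        \<rho> n (g \<otimes>\<^bsub>G n\<^esub> h) = \<rho> n g \<circ> \<rho> n h) \<and>
     (\<forall>n\<ge>1. \<forall>k\<in>{1..n}. \<kappa> n k \<in> carrier (G n) \<rightarrow> carrier (G (n + d - 1))
        \<and> inj_on (\<kappa> n k) (carrier (G n))) \<and>
     \<comment> \<open>(C1)\<close>
     (\<forall>n\<ge>1. \<forall>k\<in>{1..n}. \<forall>g\<in>carrier (G n). \<forall>h\<in>carrier (G n).
        \<kappa> n k (g \<otimes>\<^bsub>G n\<^esub> h) = \<kappa> n (\<rho> n h k) g \<otimes>\<^bsub>G (n + d - 1)\<^esub> \<kappa> n k h) \<and>
     \<comment> \<open>(C2)\<close>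
     (\<forall>n\<ge>1. \<forall>k l. 1 \<le> k \<and> k < l \<and> l \<le> n \<longrightarrow> (\<forall>g\<in>carrier (G n).
        \<kappa> (n + d - 1) k (\<kappa> n l g) = \<kappa> (n + d - 1) (l + d - 1) (\<kappa> n k g))) \<and>
     \<comment> \<open>(C3)\<close>
     (\<forall>n\<ge>1. \<forall>k\<in>{1..n}. \<forall>g\<in>carrier (G n). \<forall>i\<in>{1..n + d - 1}.
        i \<notin> {k..k + d - 1} \<longrightarrow> \<rho> (n + d - 1) (\<kappa> n k g) i = std_clone d n (\<rho> n g) k i)"

text \<open>Iterated cloning: (g)(kappa_{k1}^n o kappa_{k2}^{n+d-1} o ... ).\<close>
fun clone_iter :: "nat \<Rightarrow> (nat \<Rightarrow> nat \<Rightarrow> 'g \<Rightarrow> 'g) \<Rightarrow> nat \<Rightarrow> nat list \<Rightarrow> 'g \<Rightarrow> 'g" where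
  "clone_iter d \<kappa> n [] g = g"
| "clone_iter d \<kappa> n (k # ks) g = clone_iter d \<kappa> (n + d - 1) ks (\<kappa> n k g)"

end

theory Submission
  imports Defs
begin

text \<open>Axiom (C1) with \<open>g = h = 1\<close> shows that every cloning map preserves the identity.
  Applied to \<open>g\<^sup>-\<^sup>1 g = 1\<close> it then gives \<open>(g\<^sup>-\<^sup>1)\<kappa>\<^bsub>\<rho>(g) k\<^esub> \<cdot> (g)\<kappa>\<^sub>k = 1\<close>: the inverse of a clone of
  \<open>g\<close> is a clone of \<open>g\<^sup>-\<^sup>1\<close> at the index moved by \<open>\<rho>(g)\<close>. Iterating this along \<open>k\<^sub>1, \<dots>, k\<^sub>m\<close>,
  the \<open>i\<close>-th index gets moved by \<open>\<rho>\<close> of the element cloned so far, which is \<open>\<alpha>\<^sub>i\<close>.\<close>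

locale d_ary_cloning_system =
  fixes d :: nat and G :: "nat \<Rightarrow> 'g monoid" and \<rho> :: "nat \<Rightarrow> 'g \<Rightarrow> nat \<Rightarrow> nat"
    and \<kappa> :: "nat \<Rightarrow> nat \<Rightarrow> 'g \<Rightarrow> 'g"
  assumes cloning_system: "cloning_system d G \<rho> \<kappa>"
    and arity_pos: "d \<ge> 1"
begin

lemma group_G: "n \<ge> 1 \<Longrightarrow> group (G n)"
  using cloning_system unfolding cloning_system_def by simp

lemma rho_permutes: "\<lbrakk>n \<ge> 1; g \<in> carrier (G n)\<rbrakk> \<Longrightarrow> \<rho> n g permutes {1..n}"
  using cloning_system unfolding cloning_system_def by simp

lemma rho_mult:
  "\<lbrakk>n \<ge> 1; g \<in> carrier (G n); h \<in> carrier (G n)\<rbrakk> \<Longrightarrow> \<rho> n (g \<otimes>\<^bsub>G n\<^esub> h) = \<rho> n g \<circ> \<rho> n h"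
  using cloning_system unfolding cloning_system_def by simp

lemma kappa_closed:
  "\<lbrakk>n \<ge> 1; k \<in> {1..n}; g \<in> carrier (G n)\<rbrakk> \<Longrightarrow> \<kappa> n k g \<in> carrier (G (n + d - 1))"
  using cloning_system unfolding cloning_system_def Pi_def by simp

lemma kappa_mult:
  "\<lbrakk>n \<ge> 1; k \<in> {1..n}; g \<in> carrier (G n); h \<in> carrier (G n)\<rbrakk> \<Longrightarrow>
    \<kappa> n k (g \<otimes>\<^bsub>G n\<^esub> h) = \<kappa> n (\<rho> n h k) g \<otimes>\<^bsub>G (n + d - 1)\<^esub> \<kappa> n k h"
  using cloning_system unfolding cloning_system_def by simp

lemma rho_one:
  assumes n: "n \<ge> 1"
  shows "\<rho> n \<one>\<^bsub>G n\<^esub> = id"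
proof
  fix x
  interpret group "G n" using group_G[OF n] .
  have "\<rho> n \<one>\<^bsub>G n\<^esub> = \<rho> n \<one>\<^bsub>G n\<^esub> \<circ> \<rho> n \<one>\<^bsub>G n\<^esub>"
    using rho_mult[OF n one_closed one_closed] by simp
  then have "\<rho> n \<one>\<^bsub>G n\<^esub> (\<rho> n \<one>\<^bsub>G n\<^esub> x) = \<rho> n \<one>\<^bsub>G n\<^esub> x"
    by (metis comp_apply)
  moreover have "inj (\<rho> n \<one>\<^bsub>G n\<^esub>)"
    using permutes_inj[OF rho_permutes[OF n one_closed]] .
  ultimately show "\<rho> n \<one>\<^bsub>G n\<^esub> x = id x"
    by (simp add: inj_eq)
qed

lemma kappa_one:
  assumes n: "n \<ge> 1" and k: "k \<in> {1..n}"
  shows "\<kappa> n k \<one>\<^bsub>G n\<^esub> = \<one>\<^bsub>G (n + d - 1)\<^esub>"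
proof -
  interpret G: group "G n" using group_G[OF n] .
  interpret G': group "G (n + d - 1)" using group_G arity_pos n by simp
  have closed: "\<kappa> n k \<one>\<^bsub>G n\<^esub> \<in> carrier (G (n + d - 1))"
    using kappa_closed[OF n k G.one_closed] .
  have "\<kappa> n k \<one>\<^bsub>G n\<^esub> = \<kappa> n k \<one>\<^bsub>G n\<^esub> \<otimes>\<^bsub>G (n + d - 1)\<^esub> \<kappa> n k \<one>\<^bsub>G n\<^esub>"
    using kappa_mult[OF n k G.one_closed G.one_closed] by (simp add: rho_one[OF n])
  then show ?thesis
    using G'.l_cancel_one'[OF closed closed] by simp
qed

lemma kappa_inv:
  assumes n: "n \<ge> 1" and k: "k \<in> {1..n}" and g: "g \<in> carrier (G n)"
  shows "inv\<^bsub>G (n + d - 1)\<^esub> (\<kappa> n k g) = \<kappa> n (\<rho> n g k) (inv\<^bsub>G n\<^esub> g)"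
proof -
  interpret G: group "G n" using group_G[OF n] .
  interpret G': group "G (n + d - 1)" using group_G arity_pos n by simp
  have gk: "\<rho> n g k \<in> {1..n}"
    using permutes_in_image[OF rho_permutes[OF n g]] k by blast
  have "\<kappa> n (\<rho> n g k) (inv\<^bsub>G n\<^esub> g) \<otimes>\<^bsub>G (n + d - 1)\<^esub> \<kappa> n k g = \<one>\<^bsub>G (n + d - 1)\<^esub>"
    using kappa_mult[OF n k G.inv_closed[OF g] g] by (simp add: g kappa_one[OF n k])
  then show ?thesis
    by (rule G'.inv_equality[OF _ kappa_closed[OF n k g] kappa_closed[OF n gk G.inv_closed[OF g]]])
qed

lemma level_Suc: "n + Suc i * (d - 1) = n + d - 1 + i * (d - 1)"
  using arity_pos by simp

fun inv_clone_indices :: "nat \<Rightarrow> nat list \<Rightarrow> 'g \<Rightarrow> nat list" where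
  "inv_clone_indices n [] g = []"
| "inv_clone_indices n (k # ks) g = \<rho> n g k # inv_clone_indices (n + d - 1) ks (\<kappa> n k g)"

lemma inv_clone_indices_conv_nth:
  "inv_clone_indices n ks g =
     map (\<lambda>i. \<rho> (n + i * (d - 1)) (clone_iter d \<kappa> n (take i ks) g) (ks ! i)) [0..<length ks]"
proof (induction ks arbitrary: n g)
  case Nil
  show ?case by simp
next
  case (Cons k ks)
  show ?case
    unfolding length_Cons map_upt_Suc level_Suc by (simp add: Cons.IH)
qed

lemma clone_iter_inv:
  assumes "n \<ge> 1" and "g \<in> carrier (G n)"
    and "\<forall>i<length ks. ks ! i \<in> {1..n + i * (d - 1)}"
  shows "inv\<^bsub>G (n + length ks * (d - 1))\<^esub> (clone_iter d \<kappa> n ks g)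
       = clone_iter d \<kappa> n (inv_clone_indices n ks g) (inv\<^bsub>G n\<^esub> g)"
  using assms
proof (induction ks arbitrary: n g)
  case Nil
  then show ?case by simp
next
  case (Cons k ks)
  have k: "k \<in> {1..n}"
    using Cons.prems(3) by force
  have ks: "\<forall>i<length ks. ks ! i \<in> {1..n + d - 1 + i * (d - 1)}"
  proof (intro allI impI)
    fix i
    assume "i < length ks"
    then have "Suc i < length (k # ks)"
      by simp
    with Cons.prems(3) have "(k # ks) ! Suc i \<in> {1..n + Suc i * (d - 1)}"
      by blast
    then show "ks ! i \<in> {1..n + d - 1 + i * (d - 1)}"
      by (simp only: nth_Cons_Suc level_Suc)
  qed
  have n': "n + d - 1 \<ge> 1"
    using Cons.prems(1) arity_pos by simp
  note IH = Cons.IH[OF n' kappa_closed[OF Cons.prems(1) k Cons.prems(2)] ks]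
  show ?case
    unfolding length_Cons level_Suc clone_iter.simps inv_clone_indices.simps IH
      kappa_inv[OF Cons.prems(1) k Cons.prems(2)] ..
qed

end

theorem mainTheorem8:
  fixes d n m :: nat and G :: "nat \<Rightarrow> 'g monoid" and \<rho> :: "nat \<Rightarrow> 'g \<Rightarrow> nat \<Rightarrow> nat"
    and \<kappa> :: "nat \<Rightarrow> nat \<Rightarrow> 'g \<Rightarrow> 'g" and g :: 'g and ks :: "nat list"
  assumes "d \<ge> 2"
    and "cloning_system d G \<rho> \<kappa>"
    and "n \<ge> 1"
    and "g \<in> carrier (G n)"
    and "m \<ge> 2"
    and "length ks = m"
    and "\<forall>i<m. ks ! i \<in> {1..n + i * (d - 1)}"
  shows "inv\<^bsub>G (n + m * (d - 1))\<^esub> (clone_iter d \<kappa> n ks g)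
       = clone_iter d \<kappa> n
           (map (\<lambda>i. \<rho> (n + i * (d - 1)) (clone_iter d \<kappa> n (take i ks) g) (ks ! i)) [0..<m])
           (inv\<^bsub>G n\<^esub> g)"
proof -
  interpret d_ary_cloning_system d G \<rho> \<kappa>
    using assms(1,2) by unfold_locales simp_all
  have "\<forall>i<length ks. ks ! i \<in> {1..n + i * (d - 1)}"
    using assms(6,7) by simp
  from clone_iter_inv[OF assms(3,4) this] show ?thesis
    unfolding inv_clone_indices_conv_nth assms(6) .
qed

end
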